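(* For every real constant $c>0$ and every positive integer $N_0$, there exist an integer $N\ge N_0$ and a bipartite graph $W$ with $N$ vertices in each part and exactly $N^{6/5}$ edges such that $W$ is $C_{10}$-free and every subgraph of $W$ with at least $c\,|E(W)|$ edges contains a copy of $C_8$.
   Context: $C_m$ denotes the cycle of length $m$; a graph is $F$-free if it contains no subgraph isomorphic to $F$. (In the paper, $W$ is the Wenger graph $W_5(q)$: for a prime power $q$, the bipartite point–line incidence graph between $\mathbb{F}_q^5$ and the set of all affine lines $\{v+t(1,a,a^2,a^3,a^4): t\in\mathbb{F}_q\}$, $v\in\mathbb{F}_q^5$, $a\in\mathbb{F}_q$, so $N=q^5$.) *)

theory Defs
  imports Complex_Main
begin

text \<open>We take both parts to be {0..<N} (as two separate sorts, the first and second
  coordinate), which is faithful up to isomorphism.\<close>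

definition bip_graph :: "nat \<Rightarrow> (nat \<times> nat) set \<Rightarrow> bool" where
  "bip_graph N E \<longleftrightarrow> E \<subseteq> {0..<N} \<times> {0..<N}"

text \<open>E contains a copy of the cycle C_m (m even, m >= 4): with k = m div 2 there are
  distinct left vertices a 0, ..., a (k-1) and distinct right vertices b 0, ..., b (k-1)
  such that a i -- b i -- a (i+1 mod k) are edges. (Cycles in a bipartite graph
  alternate sides, so this captures every copy of C_m as a subgraph.)\<close>

definition contains_cycle :: "nat \<Rightarrow> (nat \<times> nat) set \<Rightarrow> bool" where
  "contains_cycle m E \<longleftrightarrow> even m \<and> m \<ge> 4 \<and>
     (\<exists>a b :: nat \<Rightarrow> nat. inj_on a {..<m div 2} \<and> inj_on b {..<m div 2} \<and>
        (\<forall>i < m div 2. (a i, b i) \<in> E \<and> (a ((i + 1) mod (m div 2)), b i) \<in> E))"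

end

theory Submission
  imports Defs "HOL-Library.FuncSet" "HOL-Computational_Algebra.Polynomial"
    "HOL-Computational_Algebra.Primes" "HOL-Analysis.Convex"
begin

text \<open>Take the Wenger graph W_5(p) for a large prime p: points of F_p^5 against the
  lines through them in the directions (1, a, a^2, a^3, a^4), so p^5 vertices on each side and
  p^6 edges. Along a 10-cycle the five point steps t_i (1, d_i, ..., d_i^4) add up to zero while
  consecutive directions d_i differ; hence some direction occurs only once, and the invertibility
  of a Vandermonde system forces its step to vanish, so two points of the cycle coincide.
  For the 8-cycles, call two edges at a common point with different directions a cherry. Two
  rounds of Cauchy-Schwarz show that a subgraph with c p^6 edges has about c^4 p^14 pairs of
  cherries with the same first line and the same second direction. Without an 8-cycle such a pair
  is determined by three coordinates (the second line of the first cherry, the offset of the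
  first coordinates of the two cherry points, the first direction), which allows only p^7 pairs;
  for p large with respect to 1/c this is impossible.\<close>

lemma real_power_powr_ratio:
  assumes "0 < q" "0 < m"
  shows "real (q ^ m) powr (n / m) = real q ^ n"
proof -
  have "real (q ^ m) powr (n / m) = (real q powr m) powr (n / m)"
    using assms by (subst powr_realpow) auto
  also have "\<dots> = real q powr (real m * (real n / real m))"
    by (rule powr_powr)
  also have "\<dots> = real q ^ n"
    using assms by (simp add: powr_realpow)
  finally show ?thesis .
qed

lemma exists_prime_above:
  fixes x :: real
  obtains q :: nat where "prime q" "n \<le> q" "x < q"
proof -
  obtain q :: nat where q: "prime q" "n + nat \<lceil>x\<rceil> < q"
    using bigger_prime by blast
  have "x \<le> real (nat \<lceil>x\<rceil>)"
    by (rule real_nat_ceiling_ge)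
  also have "\<dots> < q"
    using q(2) by simp
  finally show ?thesis
    using q that by simp
qed

section \<open>Cycles in bipartite edge sets\<close>

definition has_2k_cycle :: "nat \<Rightarrow> ('a \<times> 'b) set \<Rightarrow> bool" where
  "has_2k_cycle k E \<longleftrightarrow> (\<exists>a b. inj_on a {..<k} \<and> inj_on b {..<k} \<and>
      (\<forall>i<k. (a i, b i) \<in> E \<and> (a ((i + 1) mod k), b i) \<in> E))"

lemma contains_cycle_iff_has_2k_cycle:
  "contains_cycle m E \<longleftrightarrow> even m \<and> 4 \<le> m \<and> has_2k_cycle (m div 2) E"
  unfolding contains_cycle_def has_2k_cycle_def by simp

lemma has_2k_cycle_listI:
  assumes "distinct xs" "distinct ys" "length ys = length xs"
    and "\<forall>i<length xs. (xs ! i, ys ! i) \<in> E \<and> (xs ! ((i + 1) mod length xs), ys ! i) \<in> E"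
  shows "has_2k_cycle (length xs) E"
  unfolding has_2k_cycle_def
  using assms inj_on_nth[of xs "{..<length xs}"] inj_on_nth[of ys "{..<length xs}"] by auto

lemma has_2k_cycle_4I:
  assumes "distinct [x0, x1, x2, x3]" "distinct [l0, l1, l2, l3]"
    and "(x0, l0) \<in> E" "(x1, l0) \<in> E" "(x1, l1) \<in> E" "(x2, l1) \<in> E"
    and "(x2, l2) \<in> E" "(x3, l2) \<in> E" "(x3, l3) \<in> E" "(x0, l3) \<in> E"
  shows "has_2k_cycle 4 E"
proof -
  have all_less_4: "(\<forall>i<4. P i) \<longleftrightarrow> P 0 \<and> P 1 \<and> P 2 \<and> P 3" for P :: "nat \<Rightarrow> bool"
    by (auto simp: numeral_eq_Suc All_less_Suc)
  have len: "length [x0, x1, x2, x3] = 4"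
    by simp
  have "has_2k_cycle (length [x0, x1, x2, x3]) E"
  proof (rule has_2k_cycle_listI[OF assms(1,2)])
    show "\<forall>i<length [x0, x1, x2, x3]. ([x0, x1, x2, x3] ! i, [l0, l1, l2, l3] ! i) \<in> E \<and>
        ([x0, x1, x2, x3] ! ((i + 1) mod length [x0, x1, x2, x3]), [l0, l1, l2, l3] ! i) \<in> E"
      unfolding len all_less_4 using assms(3-10) by simp
  qed simp
  then show ?thesis
    unfolding len .
qed

lemma has_2k_cycle_image:
  assumes "has_2k_cycle k E" "E \<subseteq> P \<times> L" "inj_on f P" "inj_on g L"
  shows "has_2k_cycle k (map_prod f g ` E)"
proof -
  obtain a b where a: "inj_on a {..<k}" and b: "inj_on b {..<k}"
    and edges: "\<And>i. i < k \<Longrightarrow> (a i, b i) \<in> E \<and> (a ((i + 1) mod k), b i) \<in> E"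
    using assms(1) unfolding has_2k_cycle_def by blast
  have "a ` {..<k} \<subseteq> P" "b ` {..<k} \<subseteq> L"
    using edges assms(2) by blast+
  then have "inj_on (f \<circ> a) {..<k}" "inj_on (g \<circ> b) {..<k}"
    using a b assms(3,4) by (auto intro: comp_inj_on inj_on_subset)
  moreover have "((f \<circ> a) i, (g \<circ> b) i) \<in> map_prod f g ` E \<and>
      ((f \<circ> a) ((i + 1) mod k), (g \<circ> b) i) \<in> map_prod f g ` E" if "i < k" for i
    using edges[OF that] by force
  ultimately show ?thesis
    unfolding has_2k_cycle_def by blast
qed

lemma has_2k_cycle_image_iff:
  assumes "E \<subseteq> P \<times> L" "inj_on f P" "inj_on g L"
  shows "has_2k_cycle k (map_prod f g ` E) \<longleftrightarrow> has_2k_cycle k E"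
proof
  assume "has_2k_cycle k (map_prod f g ` E)"
  moreover have "map_prod f g ` E \<subseteq> f ` P \<times> g ` L"
    using assms(1) by auto
  moreover have "map_prod (inv_into P f) (inv_into L g) ` map_prod f g ` E = E"
    using assms by (force simp: image_image)
  ultimately show "has_2k_cycle k E"
    using has_2k_cycle_image[of k _ "f ` P" "g ` L" "inv_into P f" "inv_into L g"]
    by (metis inj_on_inv_into order_refl)
qed (use assms has_2k_cycle_image in blast)

lemma bipartite_relabel:
  assumes "finite P" "finite L" "E \<subseteq> P \<times> L" "card P = N" "card L = N"
  obtains h where "inj_on h E" "h ` E \<subseteq> {0..<N} \<times> {0..<N}"
    "\<And>F k. F \<subseteq> E \<Longrightarrow> has_2k_cycle k (h ` F) \<longleftrightarrow> has_2k_cycle k F"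
proof -
  obtain f where f: "bij_betw f P {0..<N}"
    using ex_bij_betw_finite_nat[OF assms(1)] assms(4) by blast
  obtain g where g: "bij_betw g L {0..<N}"
    using ex_bij_betw_finite_nat[OF assms(2)] assms(5) by blast
  have inj: "inj_on f P" "inj_on g L"
    using f g by (auto simp: bij_betw_def)
  show ?thesis
  proof
    show "inj_on (map_prod f g) E"
      using map_prod_inj_on[OF inj] assms(3) by (rule inj_on_subset)
    show "map_prod f g ` E \<subseteq> {0..<N} \<times> {0..<N}"
      using assms(3) f g by (force simp: bij_betw_def)
    show "has_2k_cycle k (map_prod f g ` F) \<longleftrightarrow> has_2k_cycle k F" if "F \<subseteq> E" for F k
      using has_2k_cycle_image_iff[OF _ inj] that assms(3) by blast
  qed
qed

section \<open>Counting collisions\<close>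

definition collisions :: "('a \<Rightarrow> 'b) \<Rightarrow> 'a set \<Rightarrow> ('a \<times> 'a) set" where
  "collisions h A = {(u, v) \<in> A \<times> A. u \<noteq> v \<and> h u = h v}"

lemma finite_collisions: "finite A \<Longrightarrow> finite (collisions h A)"
  unfolding collisions_def by (auto intro: finite_subset[of _ "A \<times> A"])

lemma card_sq_le_card_collisions:
  assumes "finite A" "finite B" "h ` A \<subseteq> B"
  shows "real (card A)^2 \<le> real (card B) * (card A + card (collisions h A))"
proof -
  define fibre where "fibre y = {u \<in> A. h u = y}" for y
  have "card A = card (\<Union>y\<in>B. fibre y)"
    using assms(3) unfolding fibre_def by (auto intro!: arg_cong[where f = card])
  also have "\<dots> = (\<Sum>y\<in>B. card (fibre y))"
    by (rule card_UN_disjoint) (use assms in \<open>auto simp: fibre_def\<close>)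
  finally have card_A: "card A = (\<Sum>y\<in>B. card (fibre y))" .
  have pairs: "{(u, v) \<in> A \<times> A. h u = h v} = (\<Union>y\<in>B. fibre y \<times> fibre y)"
    using assms(3) unfolding fibre_def by auto
  have "card A + card (collisions h A) = card ((\<lambda>u. (u, u)) ` A \<union> collisions h A)"
    by (subst card_Un_disjoint)
       (use assms(1) finite_collisions in \<open>auto simp: collisions_def card_image inj_on_def\<close>)
  also have "(\<lambda>u. (u, u)) ` A \<union> collisions h A = {(u, v) \<in> A \<times> A. h u = h v}"
    unfolding collisions_def by auto
  also have "card \<dots> = (\<Sum>y\<in>B. card (fibre y) * card (fibre y))"
    unfolding pairs
    by (subst card_UN_disjoint) (use assms in \<open>auto simp: fibre_def card_cartesian_product\<close>)
  finally have card_pairs: "card A + card (collisions h A) = (\<Sum>y\<in>B. card (fibre y) ^ 2)"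
    by (simp add: power2_eq_square)
  have "real (card A)^2 = (\<Sum>y\<in>B. real (card (fibre y)))\<^sup>2"
    unfolding card_A by simp
  also have "\<dots> \<le> (\<Sum>y\<in>B. (real (card (fibre y)))\<^sup>2) * card B"
    by (rule sum_squared_le_sum_of_squares)
  also have "\<dots> = real (card B) * (card A + card (collisions h A))"
    using arg_cong[OF card_pairs, of real] by (simp add: mult.commute)
  finally show ?thesis .
qed

section \<open>Power sums modulo a prime\<close>

lemma residue_eqI:
  fixes u v p :: int
  assumes "u \<in> {0..<p}" "v \<in> {0..<p}" "p dvd (u - v)"
  shows "u = v"
  using assms by (auto simp: mod_eq_dvd_iff[symmetric])

lemma sum_rotate_mod:
  fixes g :: "nat \<Rightarrow> 'a::comm_monoid_add"
  shows "(\<Sum>i<k. g ((i + 1) mod k)) = (\<Sum>i<k. g i)"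
proof (cases k)
  case (Suc n)
  have "(\<Sum>i<Suc n. g ((i + 1) mod Suc n)) = (\<Sum>i<n. g (Suc i)) + g 0"
    by simp
  also have "\<dots> = (\<Sum>i<Suc n. g i)"
    unfolding sum.lessThan_Suc_shift by (simp add: add.commute)
  finally show ?thesis
    using Suc by simp
qed simp

lemma proper_colouring_C5_has_singleton_class:
  fixes d :: "nat \<Rightarrow> 'a"
  assumes "\<forall>i<5. d i \<noteq> d ((i + 1) mod 5)"
  shows "\<exists>i0<5. \<forall>i<5. d i = d i0 \<longrightarrow> i = i0"
proof -
  have all_5: "(\<forall>i<5. P i) \<longleftrightarrow> P 0 \<and> P 1 \<and> P 2 \<and> P 3 \<and> P 4" for P :: "nat \<Rightarrow> bool"
    by (auto simp: numeral_eq_Suc All_less_Suc)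
  have ex_5: "(\<exists>i<5. P i) \<longleftrightarrow> P 0 \<or> P 1 \<or> P 2 \<or> P 3 \<or> P 4" for P :: "nat \<Rightarrow> bool"
    by (auto simp: numeral_eq_Suc Ex_less_Suc)
  show ?thesis
    using assms unfolding all_5 ex_5 by (simp add: numeral_2_eq_2) (smt (verit))
qed

text \<open>Multiplying by the polynomial of degree less than n that vanishes at all nodes d i
  except d i0 isolates the total weight at d i0.\<close>

lemma prime_dvd_node_weight_if_dvd_power_sums:
  fixes p :: int and d t :: "'i \<Rightarrow> int"
  assumes "prime p" "finite I" "d ` I \<subseteq> {0..<p}" "card (d ` I) \<le> n"
    and "\<forall>j<n. p dvd (\<Sum>i\<in>I. t i * d i ^ j)" "i0 \<in> I"
  shows "p dvd (\<Sum>i\<in>{i\<in>I. d i = d i0}. t i)"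
proof -
  define E where "E = d ` I - {d i0}"
  define Q where "Q = (\<Prod>e\<in>E. [:-e, 1:])"
  have fin_E: "finite E"
    using assms(2) unfolding E_def by simp
  have "card (d ` I) > 0"
    using assms(2,6) by (auto simp: card_gt_0_iff)
  then have "card E < n"
    using assms(2,4,6) unfolding E_def by (simp add: card_Diff_singleton)
  moreover have "degree Q \<le> card E"
    unfolding Q_def using degree_prod_sum_le[OF fin_E, of "\<lambda>e. [:-e, 1:]"] by simp
  ultimately have deg_Q: "degree Q < n"
    by linarith
  have poly_Q: "poly Q z = (\<Sum>l<n. coeff Q l * z ^ l)" for z
    unfolding poly_altdef
    by (rule sum.mono_neutral_left) (use deg_Q in \<open>auto simp: coeff_eq_0\<close>)
  have "p dvd (\<Sum>l<n. coeff Q l * (\<Sum>i\<in>I. t i * d i ^ l))"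
    using assms(5) by (intro dvd_sum) simp
  also have "(\<Sum>l<n. coeff Q l * (\<Sum>i\<in>I. t i * d i ^ l)) = (\<Sum>i\<in>I. t i * poly Q (d i))"
    unfolding poly_Q sum_distrib_left
    by (subst sum.swap) (simp add: algebra_simps)
  finally have "p dvd (\<Sum>i\<in>I. t i * poly Q (d i))" .
  moreover have "poly Q (d i) = 0" if "i \<in> I" "d i \<noteq> d i0" for i
    using that fin_E unfolding Q_def E_def poly_prod by (auto intro: prod_zero)
  then have "(\<Sum>i\<in>I. t i * poly Q (d i)) = (\<Sum>i\<in>I. if d i = d i0 then t i * poly Q (d i0) else 0)"
    by (intro sum.cong) auto
  also have "\<dots> = (\<Sum>i\<in>{i\<in>I. d i = d i0}. t i * poly Q (d i0))"
    using assms(2) by (rule sum.inter_filter[symmetric])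
  also have "\<dots> = (\<Sum>i\<in>{i\<in>I. d i = d i0}. t i) * poly Q (d i0)"
    by (rule sum_distrib_right[symmetric])
  moreover have "\<not> p dvd poly Q (d i0)"
  proof
    assume "p dvd poly Q (d i0)"
    then obtain e where e: "e \<in> E" "p dvd (d i0 - e)"
      using prime_dvd_prod_iff[OF fin_E assms(1)] unfolding Q_def poly_prod by auto
    moreover have "d i0 \<in> {0..<p}" "e \<in> {0..<p}"
      using e(1) assms(3,6) unfolding E_def by auto
    ultimately have "d i0 = e"
      using residue_eqI by blast
    then show False
      using e(1) unfolding E_def by simp
  qed
  ultimately show ?thesis
    using assms(1) by (auto simp: prime_dvd_mult_iff)
qed

section \<open>The Wenger graph over a prime field\<close>

text \<open>F_p is modelled by the residues {0..<p} of int, so that equations in F_p become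
  divisibility by p.\<close>

type_synonym point = "nat \<Rightarrow> int"
type_synonym line = "int \<times> (nat \<Rightarrow> int)"

definition wenger_points :: "int \<Rightarrow> point set" where
  "wenger_points p = PiE {..<5} (\<lambda>_. {0..<p})"

text \<open>The line through x in direction (1, a, a^2, a^3, a^4) is represented by a together with
  the coordinates j = 1..4 of its unique point with first coordinate 0.\<close>

definition wenger_line :: "int \<Rightarrow> point \<Rightarrow> int \<Rightarrow> line" where
  "wenger_line p x a = (a, restrict (\<lambda>j. (x j - x 0 * a ^ j) mod p) {1..4})"

definition wenger_lines :: "int \<Rightarrow> line set" where
  "wenger_lines p = {0..<p} \<times> PiE {1..4} (\<lambda>_. {0..<p})"

definition wenger_edge :: "int \<Rightarrow> point \<times> int \<Rightarrow> point \<times> line" where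
  "wenger_edge p = (\<lambda>(x, a). (x, wenger_line p x a))"

definition wenger_edges :: "int \<Rightarrow> (point \<times> line) set" where
  "wenger_edges p = wenger_edge p ` (wenger_points p \<times> {0..<p})"

definition collinear_dir :: "int \<Rightarrow> int \<Rightarrow> point \<Rightarrow> point \<Rightarrow> bool" where
  "collinear_dir p a x y \<longleftrightarrow> (\<forall>j<5. p dvd (y j - x j - (y 0 - x 0) * a ^ j))"

lemma wenger_points_eqI:
  assumes "x \<in> wenger_points p" "y \<in> wenger_points p" "\<And>j. j < 5 \<Longrightarrow> p dvd (y j - x j)"
  shows "x = y"
proof (rule PiE_ext)
  show "x \<in> PiE {..<5} (\<lambda>_. {0..<p})" "y \<in> PiE {..<5} (\<lambda>_. {0..<p})"
    using assms(1,2) unfolding wenger_points_def .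
  show "x j = y j" if "j \<in> {..<5}" for j
    using that assms residue_eqI[of "x j" p "y j"]
    unfolding wenger_points_def by (auto simp: PiE_iff dvd_diff_commute)
qed

lemma wenger_line_eq_iff_collinear: "wenger_line p x a = wenger_line p y a \<longleftrightarrow> collinear_dir p a x y"
proof -
  have "wenger_line p x a = wenger_line p y a \<longleftrightarrow>
      (\<forall>j\<in>{1..4}. (x j - x 0 * a ^ j) mod p = (y j - y 0 * a ^ j) mod p)"
    unfolding wenger_line_def by (auto simp: restrict_def fun_eq_iff split: if_splits)
  also have "\<dots> \<longleftrightarrow> (\<forall>j\<in>{1..4}. p dvd (y j - x j - (y 0 - x 0) * a ^ j))"
    by (simp add: mod_eq_dvd_iff dvd_diff_commute algebra_simps)
  also have "\<dots> \<longleftrightarrow> collinear_dir p a x y"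
    unfolding collinear_dir_def
  proof safe
    fix j :: nat
    assume "\<forall>j\<in>{1..4}. p dvd (y j - x j - (y 0 - x 0) * a ^ j)" "j < 5"
    then show "p dvd (y j - x j - (y 0 - x 0) * a ^ j)"
      by (cases "j = 0") auto
  qed auto
  finally show ?thesis .
qed

lemma wenger_line_eq_iff:
  "wenger_line p x a = wenger_line p y b \<longleftrightarrow> a = b \<and> collinear_dir p a x y"
proof -
  have "wenger_line p x a = wenger_line p y b \<Longrightarrow> a = b"
    unfolding wenger_line_def by simp
  then show ?thesis
    using wenger_line_eq_iff_collinear by blast
qed

lemma collinear_dir_sym: "collinear_dir p a x y \<Longrightarrow> collinear_dir p a y x"
  unfolding wenger_line_eq_iff_collinear[symmetric] by simp

lemma collinear_dir_trans:
  "collinear_dir p a x y \<Longrightarrow> collinear_dir p a y z \<Longrightarrow> collinear_dir p a x z"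
  unfolding wenger_line_eq_iff_collinear[symmetric] by simp

lemma collinear_dir_eqI:
  assumes "x \<in> wenger_points p" "y \<in> wenger_points p" "collinear_dir p a x y" "p dvd (y 0 - x 0)"
  shows "x = y"
proof (rule wenger_points_eqI[OF assms(1,2)])
  fix j :: nat
  assume "j < 5"
  then have "p dvd (y j - x j - (y 0 - x 0) * a ^ j)"
    using assms(3) unfolding collinear_dir_def by blast
  moreover have "p dvd (y 0 - x 0) * a ^ j"
    using assms(4) by simp
  ultimately have "p dvd (y j - x j - (y 0 - x 0) * a ^ j) + (y 0 - x 0) * a ^ j"
    by (rule dvd_add)
  then show "p dvd (y j - x j)"
    by simp
qed

lemma collinear_dir_unique:
  assumes "prime p" "x \<in> wenger_points p" "y \<in> wenger_points p" "x \<noteq> y"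
    and "a \<in> {0..<p}" "b \<in> {0..<p}" "collinear_dir p a x y" "collinear_dir p b x y"
  shows "a = b"
proof -
  have "p dvd (y 1 - x 1 - (y 0 - x 0) * a)" "p dvd (y 1 - x 1 - (y 0 - x 0) * b)"
    using assms(7,8) unfolding collinear_dir_def by (auto dest: spec[of _ 1])
  then have "p dvd (y 1 - x 1 - (y 0 - x 0) * a) - (y 1 - x 1 - (y 0 - x 0) * b)"
    by (rule dvd_diff)
  then have "p dvd (y 0 - x 0) * (b - a)"
    by (simp add: algebra_simps)
  moreover have "\<not> p dvd (y 0 - x 0)"
    using collinear_dir_eqI[OF assms(2,3,7)] assms(4) by blast
  ultimately have "p dvd (b - a)"
    using assms(1) by (simp add: prime_dvd_mult_iff)
  then show ?thesis
    using residue_eqI[OF assms(6,5)] by simp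
qed

lemma collinear_dir_parallelogram:
  assumes "collinear_dir p a x x'" "collinear_dir p a y y'" "collinear_dir p b x y"
    and "p dvd ((x' 0 - x 0) - (y' 0 - y 0))"
  shows "collinear_dir p b x' y'"
  unfolding collinear_dir_def
proof (intro allI impI)
  fix j :: nat
  assume "j < 5"
  define D where "D = (y' 0 - y 0) - (x' 0 - x 0)"
  have "y' j - x' j - (y' 0 - x' 0) * b ^ j =
     (y' j - y j - (y' 0 - y 0) * a ^ j) + (y j - x j - (y 0 - x 0) * b ^ j)
     - (x' j - x j - (x' 0 - x 0) * a ^ j) + D * (a ^ j - b ^ j)"
    unfolding D_def by (simp add: algebra_simps)
  moreover have "p dvd D"
    using assms(4) unfolding D_def by (simp add: dvd_diff_commute)
  moreover have "p dvd (y' j - y j - (y' 0 - y 0) * a ^ j)" "p dvd (y j - x j - (y 0 - x 0) * b ^ j)"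
    "p dvd (x' j - x j - (x' 0 - x 0) * a ^ j)"
    using assms(1-3) \<open>j < 5\<close> unfolding collinear_dir_def by auto
  ultimately show "p dvd (y' j - x' j - (y' 0 - x' 0) * b ^ j)"
    by (metis dvd_add dvd_diff dvd_mult2)
qed

lemma wenger_edges_iff:
  "(x, l) \<in> wenger_edges p \<longleftrightarrow> x \<in> wenger_points p \<and> fst l \<in> {0..<p} \<and> l = wenger_line p x (fst l)"
  unfolding wenger_edges_def wenger_edge_def by (cases l) (auto simp: wenger_line_def)

lemma inj_wenger_edge: "inj (wenger_edge p)"
  by (rule injI) (auto simp: wenger_edge_def wenger_line_def)

lemma wenger_line_in_lines: "a \<in> {0..<p} \<Longrightarrow> wenger_line p x a \<in> wenger_lines p"
  unfolding wenger_line_def wenger_lines_def by (auto simp: PiE_iff)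

lemma wenger_edges_subset: "wenger_edges p \<subseteq> wenger_points p \<times> wenger_lines p"
  unfolding wenger_edges_def wenger_edge_def by (auto simp: wenger_line_in_lines)

lemma finite_wenger_points: "finite (wenger_points p)"
  unfolding wenger_points_def by (simp add: finite_PiE)

lemma finite_wenger_lines: "finite (wenger_lines p)"
  unfolding wenger_lines_def by (simp add: finite_PiE)

lemma card_wenger_points: "card (wenger_points p) = nat p ^ 5"
  unfolding wenger_points_def by (simp add: card_PiE)

lemma card_wenger_lines: "card (wenger_lines p) = nat p ^ 5"
  unfolding wenger_lines_def by (simp add: card_PiE card_cartesian_product flip: power_Suc)

lemma card_wenger_edges: "card (wenger_edges p) = nat p ^ 6"
  unfolding wenger_edges_def
  by (simp add: card_image inj_on_subset[OF inj_wenger_edge] card_cartesian_product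
      card_wenger_points flip: power_Suc2)

section \<open>The Wenger graph has no 10-cycle\<close>

lemma closed_polygon_power_sums:
  fixes x :: "nat \<Rightarrow> point" and d :: "nat \<Rightarrow> int"
  assumes "\<And>i. i < k \<Longrightarrow> collinear_dir p (d i) (x i) (x ((i + 1) mod k))" "j < 5"
  shows "p dvd (\<Sum>i<k. (x ((i + 1) mod k) 0 - x i 0) * d i ^ j)"
proof -
  have "p dvd (\<Sum>i<k. x ((i + 1) mod k) j - x i j - (x ((i + 1) mod k) 0 - x i 0) * d i ^ j)"
    using assms unfolding collinear_dir_def by (auto intro: dvd_sum)
  also have "\<dots> = - (\<Sum>i<k. (x ((i + 1) mod k) 0 - x i 0) * d i ^ j)"
    using sum_rotate_mod[of "\<lambda>i. x i j" k] by (simp add: sum_subtractf)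
  finally show ?thesis
    by simp
qed

theorem wenger_no_C10:
  assumes "prime p"
  shows "\<not> has_2k_cycle 5 (wenger_edges p)"
proof
  assume "has_2k_cycle 5 (wenger_edges p)"
  then obtain x l where inj_x: "inj_on x {..<5}" and inj_l: "inj_on l {..<5}"
    and edges: "\<And>i::nat. i < 5 \<Longrightarrow>
      (x i, l i) \<in> wenger_edges p \<and> (x ((i + 1) mod 5), l i) \<in> wenger_edges p"
    unfolding has_2k_cycle_def by blast
  define d where "d i = fst (l i)" for i
  define t where "t i = x ((i + 1) mod 5) 0 - x i 0" for i
  have x_pts: "x i \<in> wenger_points p" and d_range: "d i \<in> {0..<p}"
    and l_eq: "l i = wenger_line p (x i) (d i)" "l i = wenger_line p (x ((i + 1) mod 5)) (d i)"
    if "i < 5" for i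
    using edges[OF that] unfolding wenger_edges_iff d_def by auto
  have collinear: "collinear_dir p (d i) (x i) (x ((i + 1) mod 5))" if "i < 5" for i
    using l_eq[OF that] wenger_line_eq_iff by metis
  have "p dvd (\<Sum>i<5. t i * d i ^ j)" if "j < 5" for j
    using closed_polygon_power_sums[where k = 5 and x = x and d = d, OF collinear that]
    unfolding t_def .
  moreover have "d i \<noteq> d ((i + 1) mod 5)" if "i < 5" for i
  proof
    assume "d i = d ((i + 1) mod 5)"
    then have "l i = l ((i + 1) mod 5)"
      using l_eq(2)[OF that] l_eq(1)[of "(i + 1) mod 5"] by simp
    moreover have "i \<noteq> (i + 1) mod 5"
      using that by (cases "i = 4") auto
    ultimately show False
      using inj_l that by (auto dest: inj_onD)
  qed
  then obtain i0 where i0: "i0 < 5" "\<forall>i<5. d i = d i0 \<longrightarrow> i = i0"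
    using proper_colouring_C5_has_singleton_class by blast
  moreover have "d ` {..<5} \<subseteq> {0..<p}"
    using d_range by auto
  moreover have "card (d ` {..<5}) \<le> 5"
    using card_image_le[of "{..<5::nat}" d] by simp
  ultimately have "p dvd (\<Sum>i\<in>{i\<in>{..<5}. d i = d i0}. t i)"
    using prime_dvd_node_weight_if_dvd_power_sums[OF assms, of "{..<5}" d 5 t i0] by blast
  also have "{i\<in>{..<5}. d i = d i0} = {i0}"
    using i0 by auto
  finally have "x i0 = x ((i0 + 1) mod 5)"
    using collinear_dir_eqI[OF x_pts x_pts collinear] i0(1) unfolding t_def by simp
  moreover have "i0 \<noteq> (i0 + 1) mod 5"
    using i0(1) by (cases "i0 = 4") auto
  ultimately show False
    using inj_x i0(1) by (auto dest: inj_onD)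
qed

section \<open>Dense subgraphs of the Wenger graph contain an 8-cycle\<close>

lemma wenger_rectangle_has_C8:
  assumes "prime p" "a \<in> {0..<p}" "b \<in> {0..<p}" "a \<noteq> b"
    and pts: "x \<in> wenger_points p" "x' \<in> wenger_points p" "y \<in> wenger_points p" "y' \<in> wenger_points p"
    and "x \<noteq> x'" "x \<noteq> y"
    and xx': "collinear_dir p a x x'" and yy': "collinear_dir p a y y'"
    and xy: "collinear_dir p b x y" and x'y': "collinear_dir p b x' y'"
    and F: "\<forall>u\<in>{x, x', y, y'}. \<forall>e\<in>{a, b}. (u, wenger_line p u e) \<in> F"
  shows "has_2k_cycle 4 F"
proof -
  have unique: "u = v" if "u \<in> wenger_points p" "v \<in> wenger_points p"
    "collinear_dir p a u v" "collinear_dir p b u v" for u v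
    using collinear_dir_unique[OF assms(1) that(1,2) _ assms(2,3) that(3,4)] assms(4) by blast
  have not_xy: "\<not> collinear_dir p a x y"
    using unique[OF pts(1,3) _ xy] \<open>x \<noteq> y\<close> by blast
  have not_xx': "\<not> collinear_dir p b x x'"
    using unique[OF pts(1,2) xx'] \<open>x \<noteq> x'\<close> by blast
  have not_xy': "\<not> collinear_dir p a x y'"
    using not_xy collinear_dir_trans[OF _ collinear_dir_sym[OF yy']] by blast
  have not_x'y: "\<not> collinear_dir p b x' y"
    using not_xx' collinear_dir_trans[OF xy collinear_dir_sym] by blast
  have "x \<noteq> y'"
    using not_xy collinear_dir_sym[OF yy'] by auto
  moreover have "x' \<noteq> y"
    using not_xy xx' by auto
  moreover have "x' \<noteq> y'"
    using not_xy' xx' by auto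
  moreover have "y' \<noteq> y"
    using not_x'y x'y' by auto
  ultimately have "distinct [x, x', y', y]"
    using \<open>x \<noteq> x'\<close> \<open>x \<noteq> y\<close> by auto
  moreover have "distinct [wenger_line p x a, wenger_line p x' b, wenger_line p y' a, wenger_line p y b]"
    using \<open>a \<noteq> b\<close> not_xy' not_x'y by (auto simp: wenger_line_eq_iff)
  moreover have "wenger_line p x a = wenger_line p x' a" "wenger_line p x' b = wenger_line p y' b"
    "wenger_line p y' a = wenger_line p y a" "wenger_line p y b = wenger_line p x b"
    using xx' x'y' collinear_dir_sym[OF yy'] collinear_dir_sym[OF xy]
    by (simp_all add: wenger_line_eq_iff)
  ultimately show ?thesis
    using F by (intro has_2k_cycle_4I) auto
qed

lemma wenger_cherry_pair_determined:
  assumes "prime p" "\<not> has_2k_cycle 4 F" "a \<in> {0..<p}" "b \<in> {0..<p}" "a \<noteq> b"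
    and pts: "x \<in> wenger_points p" "x' \<in> wenger_points p" "y \<in> wenger_points p" "y' \<in> wenger_points p"
    and "x \<noteq> x'"
    and xx': "collinear_dir p a x x'" and yy': "collinear_dir p a y y'"
    and xy: "collinear_dir p b x y" and shift: "p dvd (x' 0 - x 0) - (y' 0 - y 0)"
    and F: "\<forall>u\<in>{x, x', y, y'}. \<forall>e\<in>{a, b}. (u, wenger_line p u e) \<in> F"
  shows "x = y \<and> x' = y'"
proof -
  have "x = y"
  proof (rule ccontr)
    assume "x \<noteq> y"
    have "has_2k_cycle 4 F"
      by (rule wenger_rectangle_has_C8[OF assms(1,3,4,5) pts \<open>x \<noteq> x'\<close> \<open>x \<noteq> y\<close> xx' yy' xy
            collinear_dir_parallelogram[OF xx' yy' xy shift] F])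
    with assms(2) show False ..
  qed
  moreover have "collinear_dir p a x' y'"
    using xx' yy' \<open>x = y\<close> collinear_dir_sym collinear_dir_trans by blast
  moreover have "p dvd (y' 0 - x' 0)"
    using shift \<open>x = y\<close> by (simp add: dvd_diff_commute)
  ultimately show ?thesis
    using collinear_dir_eqI[OF pts(2,4)] by blast
qed

text \<open>An element ((x, a), (x, b)) of collisions fst S is a path through two edges of S at the
  point x; its key is its first line together with the direction of its second line.\<close>

type_synonym cherry = "(point \<times> int) \<times> point \<times> int"

definition cherry_key :: "int \<Rightarrow> cherry \<Rightarrow> line \<times> int" where
  "cherry_key p = (\<lambda>((x, a), _, b). (wenger_line p x a, b))"

lemma mem_cherry_collisions:
  assumes "z \<in> collisions (cherry_key p) (collisions fst S)"
  obtains x x' a b where "z = (((x, a), x, b), (x', a), x', b)" "a \<noteq> b" "x \<noteq> x'"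
    "collinear_dir p a x x'" "(x, a) \<in> S" "(x, b) \<in> S" "(x', a) \<in> S" "(x', b) \<in> S"
proof -
  obtain x a x1 b x' a' x1' b' where z: "z = (((x, a), x1, b), (x', a'), x1', b')"
    by (metis prod.collapse)
  show ?thesis
    using assms that unfolding z collisions_def cherry_key_def
    by (auto simp: wenger_line_eq_iff)
qed

definition cherry_pair_code :: "int \<Rightarrow> cherry \<times> cherry \<Rightarrow> line \<times> int \<times> int" where
  "cherry_pair_code p = (\<lambda>(((x, a), _, b), (x', _), _). (wenger_line p x b, (x' 0 - x 0) mod p, a))"

lemma inj_on_cherry_pair_code:
  assumes "prime p" "S \<subseteq> wenger_points p \<times> {0..<p}" "\<not> has_2k_cycle 4 (wenger_edge p ` S)"
  shows "inj_on (cherry_pair_code p) (collisions (cherry_key p) (collisions fst S))"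
proof (rule inj_onI)
  fix z1 z2
  assume z1_mem: "z1 \<in> collisions (cherry_key p) (collisions fst S)"
    and z2_mem: "z2 \<in> collisions (cherry_key p) (collisions fst S)"
    and code_eq: "cherry_pair_code p z1 = cherry_pair_code p z2"
  obtain x x' a b where z1: "z1 = (((x, a), x, b), (x', a), x', b)" "a \<noteq> b" "x \<noteq> x'"
    "collinear_dir p a x x'" "(x, a) \<in> S" "(x, b) \<in> S" "(x', a) \<in> S" "(x', b) \<in> S"
    using z1_mem by (rule mem_cherry_collisions)
  obtain y y' a2 b2 where z2: "z2 = (((y, a2), y, b2), (y', a2), y', b2)" "a2 \<noteq> b2" "y \<noteq> y'"
    "collinear_dir p a2 y y'" "(y, a2) \<in> S" "(y, b2) \<in> S" "(y', a2) \<in> S" "(y', b2) \<in> S"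
    using z2_mem by (rule mem_cherry_collisions)
  have "a2 = a" "b2 = b" and xy: "collinear_dir p b x y"
    and shift: "p dvd (x' 0 - x 0) - (y' 0 - y 0)"
    using code_eq unfolding z1(1) z2(1) cherry_pair_code_def
    by (auto simp: wenger_line_eq_iff mod_eq_dvd_iff)
  have ab: "a \<in> {0..<p}" "b \<in> {0..<p}"
    and pts: "x \<in> wenger_points p" "x' \<in> wenger_points p" "y \<in> wenger_points p" "y' \<in> wenger_points p"
    using z1 z2 assms(2) by auto
  have "(u, wenger_line p u e) \<in> wenger_edge p ` S" if "(u, e) \<in> S" for u e
    using that unfolding wenger_edge_def by force
  then have F: "\<forall>u\<in>{x, x', y, y'}. \<forall>e\<in>{a, b}. (u, wenger_line p u e) \<in> wenger_edge p ` S"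
    using z1 z2 \<open>a2 = a\<close> \<open>b2 = b\<close> by auto
  have "x = y \<and> x' = y'"
    using wenger_cherry_pair_determined[OF assms(1,3) ab z1(2) pts z1(3,4) _ xy shift F]
      z2(4) \<open>a2 = a\<close> by blast
  then show "z1 = z2"
    unfolding z1(1) z2(1) \<open>a2 = a\<close> \<open>b2 = b\<close> by simp
qed

lemma card_cherry_collisions_le:
  assumes "prime p" "S \<subseteq> wenger_points p \<times> {0..<p}" "\<not> has_2k_cycle 4 (wenger_edge p ` S)"
  shows "card (collisions (cherry_key p) (collisions fst S)) \<le> nat p ^ 7"
proof -
  define Z where "Z = collisions (cherry_key p) (collisions fst S)"
  have "cherry_pair_code p ` Z \<subseteq> wenger_lines p \<times> {0..<p} \<times> {0..<p}"
  proof (rule image_subsetI)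
    fix z
    assume "z \<in> Z"
    then obtain x x' a b where "z = (((x, a), x, b), (x', a), x', b)" "a \<noteq> b" "x \<noteq> x'"
      "collinear_dir p a x x'" "(x, a) \<in> S" "(x, b) \<in> S" "(x', a) \<in> S" "(x', b) \<in> S"
      unfolding Z_def by (rule mem_cherry_collisions)
    then show "cherry_pair_code p z \<in> wenger_lines p \<times> {0..<p} \<times> {0..<p}"
      using assms(1,2) prime_gt_0_int
      by (auto simp: cherry_pair_code_def intro: wenger_line_in_lines)
  qed
  then have "card Z \<le> card (wenger_lines p \<times> {0..<p} \<times> {0..<p})"
    using inj_on_cherry_pair_code[OF assms] unfolding Z_def[symmetric]
    by (intro card_inj_on_le) (auto intro: finite_wenger_lines)
  also have "\<dots> = nat p ^ 7"
    by (simp add: card_cartesian_product card_wenger_lines power2_eq_square[symmetric]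
        flip: power_add)
  finally show ?thesis
    unfolding Z_def .
qed

lemma supersaturation_bound:
  fixes c Q s y z :: real
  assumes "c > 0" "2 * (c + 1) / c^2 \<le> Q"
    and "c * Q^6 \<le> s" "s^2 \<le> Q^5 * (s + y)" "y^2 \<le> Q^6 * (y + z)" "z \<le> Q^7"
  shows "c^4 * Q \<le> 4"
proof -
  define A where "A = c^2 * Q / 2"
  have "2 * (c + 1) \<le> c^2 * Q"
    using assms(1,2) by (simp add: pos_divide_le_eq mult.commute)
  then have A_ge: "c + 1 \<le> A"
    unfolding A_def by simp
  have "0 < A"
    using A_ge assms(1) by linarith
  then have Q_pos: "0 < Q"
    unfolding A_def by (simp add: zero_less_mult_iff)
  have "0 \<le> c * Q^6"
    using assms(1) Q_pos by simp
  with assms(3) have "0 \<le> s"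
    by linarith
  have "c * Q \<le> s / Q^5"
    using assms(3) Q_pos by (simp add: pos_le_divide_eq eval_nat_numeral mult.assoc)
  have "A + 1 \<le> c * (c * Q - 1)"
    using A_ge unfolding A_def by (simp add: power2_eq_square algebra_simps)
  with \<open>0 < A\<close> have "0 < c * (c * Q - 1)"
    by linarith
  then have "0 \<le> c * Q - 1"
    using assms(1) by (simp add: zero_less_mult_iff)
  from \<open>A + 1 \<le> c * (c * Q - 1)\<close> have "Q^6 * (A + 1) \<le> (c * Q^6) * (c * Q - 1)"
    using Q_pos by (simp add: mult_left_mono mult.left_commute)
  also have "\<dots> \<le> s * (s / Q^5 - 1)"
    using assms(3) \<open>c * Q \<le> s / Q^5\<close> \<open>0 \<le> c * Q - 1\<close> \<open>0 \<le> s\<close> by (intro mult_mono) auto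
  also have "\<dots> \<le> y"
    using assms(4) Q_pos by (simp add: power2_eq_square pos_divide_le_eq algebra_simps)
  finally have y_ge: "Q^6 * (A + 1) \<le> y" .
  have "0 \<le> Q^6 * A" "0 \<le> Q^6 * (A + 1)"
    using A_ge assms(1) Q_pos by (auto intro!: mult_nonneg_nonneg)
  with y_ge have "0 \<le> y"
    by linarith
  have "Q^12 * ((A + 1) * A) = (Q^6 * (A + 1)) * (Q^6 * A)"
    by (simp add: algebra_simps flip: power_add)
  also have "\<dots> \<le> y * (y - Q^6)"
    using y_ge \<open>0 \<le> y\<close> \<open>0 \<le> Q^6 * A\<close> by (intro mult_mono) (auto simp: algebra_simps)
  also have "\<dots> \<le> Q^13"
    using assms(5) mult_left_mono[OF assms(6), of "Q^6"] Q_pos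
    by (simp add: power2_eq_square algebra_simps flip: power_add)
  also have "\<dots> = Q^12 * Q"
    by (simp flip: power_Suc2)
  finally have "(A + 1) * A \<le> Q"
    using Q_pos by simp
  moreover have "A * A \<le> (A + 1) * A"
    using \<open>0 < A\<close> by simp
  ultimately have "A * A \<le> Q"
    by linarith
  then show ?thesis
    using Q_pos unfolding A_def by (simp add: power2_eq_square algebra_simps eval_nat_numeral)
qed

lemma wenger_edge_image_has_C8:
  fixes c :: real
  assumes "prime p" "S \<subseteq> wenger_points p \<times> {0..<p}" "c * real (nat p) ^ 6 \<le> card S"
    and "c > 0" "2 * (c + 1) / c^2 \<le> real (nat p)" "4 / c^4 < real (nat p)"
  shows "has_2k_cycle 4 (wenger_edge p ` S)"
proof (rule ccontr)
  assume no_C8: "\<not> has_2k_cycle 4 (wenger_edge p ` S)"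
  define Y where "Y = collisions fst S"
  define Z where "Z = collisions (cherry_key p) Y"
  have fin_S: "finite S"
    using assms(2) by (rule finite_subset) (simp add: finite_wenger_points)
  then have fin_Y: "finite Y"
    unfolding Y_def by (rule finite_collisions)
  have "real (card S)^2 \<le> real (nat p) ^ 5 * (card S + card Y)"
    using card_sq_le_card_collisions[OF fin_S finite_wenger_points, of fst] assms(2)
    unfolding Y_def by (force simp: card_wenger_points)
  moreover have "real (card Y)^2 \<le> real (nat p) ^ 6 * (card Y + card Z)"
  proof -
    have "cherry_key p ` Y \<subseteq> wenger_lines p \<times> {0..<p}"
      using assms(2) unfolding Y_def collisions_def cherry_key_def
      by (fastforce simp: wenger_line_in_lines)
    moreover have "card (wenger_lines p \<times> {0..<p}) = nat p ^ 6"
      by (simp add: card_cartesian_product card_wenger_lines flip: power_Suc2)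
    ultimately show ?thesis
      using card_sq_le_card_collisions[OF fin_Y, of "wenger_lines p \<times> {0..<p}" "cherry_key p"]
      unfolding Z_def by (simp add: finite_wenger_lines)
  qed
  moreover have "real (card Z) \<le> real (nat p) ^ 7"
    using card_cherry_collisions_le[OF assms(1,2) no_C8] unfolding Y_def Z_def
    by (metis of_nat_le_iff of_nat_power)
  ultimately have "c^4 * real (nat p) \<le> 4"
    using supersaturation_bound[OF assms(4,5,3), of "card Y" "card Z"] by simp
  moreover have "4 < real (nat p) * c^4"
    using assms(6) pos_divide_less_eq[of "c^4"] assms(4) by (metis zero_less_power)
  ultimately show False
    by (metis mult.commute not_le)
qed

theorem wenger_dense_subgraph_has_C8:
  fixes c :: real
  assumes "prime p" "F \<subseteq> wenger_edges p" "c * real (nat p) ^ 6 \<le> card F"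
    and "c > 0" "2 * (c + 1) / c^2 + 4 / c^4 < real (nat p)"
  shows "has_2k_cycle 4 F"
proof -
  obtain S where S: "S \<subseteq> wenger_points p \<times> {0..<p}" "F = wenger_edge p ` S"
    using assms(2) unfolding wenger_edges_def subset_image_iff by blast
  moreover have "c * real (nat p) ^ 6 \<le> card S"
    using S assms(3) by (simp add: card_image inj_on_subset[OF inj_wenger_edge])
  moreover have "0 \<le> 2 * (c + 1) / c^2" "0 \<le> 4 / c^4"
    using assms(4) by simp_all
  then have "2 * (c + 1) / c^2 \<le> real (nat p)" "4 / c^4 < real (nat p)"
    using assms(5) by linarith+
  ultimately show ?thesis
    using wenger_edge_image_has_C8[OF assms(1) S(1) _ assms(4)] by blast
qed

theorem theorem1p3:
  fixes c :: real and N0 :: nat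
  assumes "c > 0" and "N0 \<ge> 1"
  shows "\<exists>(N::nat) (W::(nat \<times> nat) set).
           N \<ge> N0 \<and> bip_graph N W \<and>
           real (card W) = real N powr (6/5) \<and>
           \<not> contains_cycle 10 W \<and>
           (\<forall>F \<subseteq> W. real (card F) \<ge> c * real (card W) \<longrightarrow> contains_cycle 8 F)"
proof -
  obtain q :: nat where q: "prime q" "N0 \<le> q" "2 * (c + 1) / c^2 + 4 / c^4 < q"
    using exists_prime_above by blast
  define p where "p = int q"
  have p: "prime p" "nat p = q"
    using q(1) unfolding p_def by simp_all
  obtain h where h: "inj_on h (wenger_edges p)"
    "h ` wenger_edges p \<subseteq> {0..<q ^ 5} \<times> {0..<q ^ 5}"
    "\<And>F k. F \<subseteq> wenger_edges p \<Longrightarrow> has_2k_cycle k (h ` F) \<longleftrightarrow> has_2k_cycle k F"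
    using bipartite_relabel[OF finite_wenger_points finite_wenger_lines wenger_edges_subset[of p]
        card_wenger_points card_wenger_lines]
    unfolding p(2) by blast
  have card_W: "card (h ` wenger_edges p) = q ^ 6"
    using h(1) p(2) by (simp add: card_image card_wenger_edges)
  have "has_2k_cycle 4 F"
    if F: "F \<subseteq> h ` wenger_edges p" "c * card (h ` wenger_edges p) \<le> card F" for F
  proof -
    obtain F' where "F' \<subseteq> wenger_edges p" "F = h ` F'"
      using F(1) unfolding subset_image_iff by blast
    moreover from this have "c * real (nat p) ^ 6 \<le> card F'"
      using F(2) h(1) card_W p(2) by (simp add: card_image inj_on_subset)
    ultimately show ?thesis
      using wenger_dense_subgraph_has_C8[OF p(1) _ _ assms(1)] h(3) q(3) p(2) by simp
  qed
  moreover have "\<not> has_2k_cycle 5 (h ` wenger_edges p)"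
    using wenger_no_C10[OF p(1)] h(3) by blast
  moreover have "q \<le> q ^ 5"
    using prime_gt_0_nat[OF q(1)] by (simp add: self_le_power)
  ultimately show ?thesis
    using q(2) h(2) card_W real_power_powr_ratio[of q 5 6] prime_gt_0_nat[OF q(1)]
    by (intro exI[of _ "q ^ 5"] exI[of _ "h ` wenger_edges p"])
       (auto simp: bip_graph_def contains_cycle_iff_has_2k_cycle)
qed

end
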